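(* Let $J:\mathbb{R}^N\to\mathbb{R}$ be a finite-valued convex function, let $\Phi:\mathbb{R}^N\to\mathbb{R}^P$ be linear, let $x_0\in\mathbb{R}^N$, and write $T=T_{x_0}=\mathrm{Lin}(\partial J(x_0))^\perp$. Assume $\ker(\Phi)\cap T=\{0\}$. Define the linearized pre-certificate $$\eta_F=\Phi^*\,\operatorname*{argmin}\{\|p\| \;:\; p\in\mathbb{R}^P,\ \Phi^*p\in\mathrm{aff}(\partial J(x_0))\}.$$ Then $$\eta_F=\Phi^*\,(\Phi_T^{+})^{*}\, e_{x_0},\qquad\text{where } e_{x_0}=\mathrm{P}_T(\partial J(x_0))\in\mathbb{R}^N.$$
   Context: $\partial J(x)$ denotes the convex subdifferential of $J$ at $x$. For a convex set $E$, $\mathrm{aff}(E)$ is its affine hull and $\mathrm{Lin}(E)$ the linear subspace parallel to $\mathrm{aff}(E)$. For a subspace $T$, $\mathrm{P}_T$ is the orthogonal projection onto $T$ and $\Phi_T=\Phi\,\mathrm{P}_T$. For a matrix $A$, $A^*$ is its transpose and $A^+$ its Moore–Penrose pseudo-inverse. Since $\mathrm{aff}(\partial J(x_0))$ is parallel to $T^\perp$, the image $\mathrm{P}_T(\partial J(x_0))$ consists of a single vector, denoted $e_{x_0}$. Under the assumption $\ker(\Phi)\cap T=\{0\}$, the constraint set in the definition of $\eta_F$ is a non-empty affine space, so the minimal-norm $p$ is unique and $\eta_F$ is well defined. *)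

theory Defs
  imports "HOL-Analysis.Analysis"
begin

definition subdiff :: "(real^'n \<Rightarrow> real) \<Rightarrow> real^'n \<Rightarrow> (real^'n) set" where
  "subdiff J x = {g. \<forall>y. J y \<ge> J x + g \<bullet> (y - x)}"

definition lin_of :: "(real^'n) set \<Rightarrow> (real^'n) set" where
  "lin_of E = {a - b | a b. a \<in> affine hull E \<and> b \<in> affine hull E}"

definition proj_mat :: "(real^'n) set \<Rightarrow> real^'n^'n" where
  "proj_mat T = matrix (closest_point T)"

definition pinv :: "real^'n^'m \<Rightarrow> real^'m^'n" where
  "pinv A = (THE B. A ** B ** A = A \<and> B ** A ** B = B \<and>
                   transpose (A ** B) = A ** B \<and> transpose (B ** A) = B ** A)"

definition eta_F :: "(real^'n \<Rightarrow> real) \<Rightarrow> real^'n^'p \<Rightarrow> real^'n \<Rightarrow> real^'n" where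
  "eta_F J Phi x0 = transpose Phi *v
     (THE p. transpose Phi *v p \<in> affine hull (subdiff J x0) \<and>
        (\<forall>q. transpose Phi *v q \<in> affine hull (subdiff J x0) \<longrightarrow> norm p \<le> norm q))"

end

theory Submission
  imports Defs
begin

text \<open>Pick a subgradient \<open>s\<^sub>0\<close> (it exists by separating the strict epigraph of \<open>J\<close> from
  \<open>(x\<^sub>0, J x\<^sub>0)\<close>). Then \<open>aff \<partial>J(x\<^sub>0) = s\<^sub>0 + T\<^sup>\<bottom>\<close>, so with \<open>P = P\<^sub>T\<close> the constraint
  \<open>\<Phi>\<^sup>*p \<in> aff \<partial>J(x\<^sub>0)\<close> reads \<open>(\<Phi>P)\<^sup>*p = P s\<^sub>0 = e\<^sub>x\<^sub>0\<close>. Since \<open>\<Phi>\<close> is injective on \<open>T\<close>,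
  \<open>\<Phi>P\<close> and \<open>P\<close> have the same kernel, hence \<open>(\<Phi>P)\<^sup>+\<Phi>P = P\<close> (two orthogonal projections with
  the same kernel coincide) and the constraint is solvable. For a consistent system \<open>Ax = b\<close> the
  vector \<open>A\<^sup>+b\<close> is the solution of least norm: it is fixed by the symmetric projection \<open>A\<^sup>+A\<close>,
  whose range is orthogonal to \<open>ker A\<close>. Apply this to \<open>A = (\<Phi>P)\<^sup>*\<close>, using
  \<open>((\<Phi>P)\<^sup>*)\<^sup>+ = ((\<Phi>P)\<^sup>+)\<^sup>*\<close>.\<close>

section \<open>Subgradients\<close>

lemma convex_on_strict_epigraph:
  fixes J :: "'a::real_vector \<Rightarrow> real"
  assumes "convex_on UNIV J"
  shows "convex {z. J (fst z) < snd z}"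
  unfolding convex_alt
proof (intro ballI allI impI)
  fix z w :: "'a \<times> real" and u :: real
  assume z: "z \<in> {z. J (fst z) < snd z}" and w: "w \<in> {z. J (fst z) < snd z}"
    and u: "0 \<le> u \<and> u \<le> 1"
  have "J ((1 - u) *\<^sub>R fst z + u *\<^sub>R fst w) \<le> (1 - u) * J (fst z) + u * J (fst w)"
    using convex_onD[OF assms, of u "fst z" "fst w"] u by auto
  also have "\<dots> < (1 - u) * snd z + u * snd w"
  proof (cases "u = 0")
    case True
    then show ?thesis using z by simp
  next
    case False
    have "(1 - u) * J (fst z) \<le> (1 - u) * snd z"
      using z u by (intro mult_left_mono) auto
    moreover have "u * J (fst w) < u * snd w"
      using w u False by (intro mult_strict_left_mono) auto
    ultimately show ?thesis by linarith
  qed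
  finally show "(1 - u) *\<^sub>R z + u *\<^sub>R w \<in> {z. J (fst z) < snd z}" by simp
qed

text \<open>A hyperplane separating the strict epigraph from the point \<open>(x, J x)\<close> cannot be
  vertical, and its normal, rescaled to have last coordinate \<open>-1\<close>, is a subgradient.\<close>

lemma convex_on_subgradient_exists:
  fixes J :: "'a::euclidean_space \<Rightarrow> real"
  assumes "convex_on UNIV J"
  obtains g where "\<And>y. J x + g \<bullet> (y - x) \<le> J y"
proof -
  define E where "E = {z::'a \<times> real. J (fst z) < snd z}"
  have "(x, J x + 1) \<in> E" by (simp add: E_def)
  moreover have "E \<inter> {(x, J x)} = {}" by (simp add: E_def)
  ultimately obtain a b where a0: "a \<noteq> 0" and aE: "\<forall>z\<in>E. a \<bullet> z \<le> b"
    and ax: "\<forall>z\<in>{(x, J x)}. b \<le> a \<bullet> z"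
    using separating_hyperplane_sets[OF convex_on_strict_epigraph[OF assms] convex_singleton,
        folded E_def, of "(x, J x)"]
    by blast
  obtain a1 a2 where aa: "a = (a1, a2)" by (cases a)
  have ax': "b \<le> a1 \<bullet> x + a2 * J x" using ax aa by simp
  have below: "a1 \<bullet> y + a2 * t \<le> b" if "J y < t" for y t
    using aE that aa by (auto simp: E_def)
  have "a2 \<le> 0"
    using below[of x "J x + 1"] ax' by (simp add: algebra_simps)
  moreover have "a2 \<noteq> 0"
  proof
    assume a2: "a2 = 0"
    then have "a1 \<noteq> 0" using a0 aa by (auto simp: zero_prod_def)
    have "a1 \<bullet> (x + a1) \<le> b" using below[of "x + a1" "J (x + a1) + 1"] a2 by simp
    then have "a1 \<bullet> a1 \<le> 0" using ax' a2 by (simp add: inner_add_right)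
    then show False using \<open>a1 \<noteq> 0\<close> by (metis inner_gt_zero_iff not_le)
  qed
  ultimately have a2: "a2 < 0" by simp
  define g where "g = (- 1 / a2) *\<^sub>R a1"
  have g: "g \<bullet> (y - x) = a1 \<bullet> (x - y) / a2" for y
    using a2 by (simp add: g_def inner_diff_right field_simps)
  have "J x + g \<bullet> (y - x) \<le> J y" for y
  proof (rule ccontr)
    assume contra: "\<not> ?thesis"
    then have "J y < (J y + J x + g \<bullet> (y - x)) / 2" (is "_ < ?t")
      by simp
    from below[OF this] ax' have "a2 * (?t - J x) \<le> a1 \<bullet> (x - y)"
      by (simp add: algebra_simps inner_diff_right)
    then have "g \<bullet> (y - x) \<le> ?t - J x"
      using a2 by (simp add: g neg_divide_le_eq mult.commute)
    then show False
      using contra by (simp add: field_simps)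
  qed
  then show ?thesis using that by blast
qed

section \<open>Orthogonal projections onto subspaces\<close>

lemma closest_point_subspace_eqI:
  fixes T :: "'a::euclidean_space set"
  assumes T: "subspace T" and t: "t \<in> T" and at: "a - t \<in> orthogonal_comp T"
  shows "closest_point T a = t"
proof -
  have "dist a t \<le> dist a z" if z: "z \<in> T" for z
  proof -
    have "orthogonal (a - t) (t - z)"
      using at subspace_diff[OF T t z] by (auto simp: orthogonal_comp_def orthogonal_commute)
    then have "(norm (a - z))\<^sup>2 = (norm (a - t))\<^sup>2 + (norm (t - z))\<^sup>2"
      by (metis norm_add_Pythagorean diff_add_cancel add_diff_eq)
    then show ?thesis
      by (simp add: dist_norm power2_le_imp_le)
  qed
  then show ?thesis
    using closest_point_unique[OF subspace_imp_convex[OF T] closed_subspace[OF T] t] by auto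
qed

lemma closest_point_subspace:
  fixes T :: "'a::euclidean_space set"
  assumes T: "subspace T"
  shows "closest_point T a \<in> T" and "a - closest_point T a \<in> orthogonal_comp T"
proof -
  obtain v w where "a = v + w" "v \<in> T" "w \<in> orthogonal_comp T"
    using subspace_sum_orthogonal_comp[OF T] set_plus_elim by (metis UNIV_I)
  moreover from this have "closest_point T a = v"
    using closest_point_subspace_eqI[OF T] by simp
  ultimately show "closest_point T a \<in> T" "a - closest_point T a \<in> orthogonal_comp T"
    by auto
qed

lemma linear_closest_point_subspace:
  fixes T :: "'a::euclidean_space set"
  assumes T: "subspace T"
  shows "linear (closest_point T)"
proof (rule linearI)
  note sub = closest_point_subspace[OF T]
  have perp: "subspace (orthogonal_comp T)"
    by (rule subspace_orthogonal_comp)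
  fix x y :: 'a and c :: real
  have "x + y - (closest_point T x + closest_point T y) =
      (x - closest_point T x) + (y - closest_point T y)" by simp
  then have "x + y - (closest_point T x + closest_point T y) \<in> orthogonal_comp T"
    using sub perp by (metis subspace_add)
  then show "closest_point T (x + y) = closest_point T x + closest_point T y"
    using sub T by (intro closest_point_subspace_eqI) (auto intro: subspace_add)
  have "c *\<^sub>R x - c *\<^sub>R closest_point T x = c *\<^sub>R (x - closest_point T x)"
    by (simp add: algebra_simps)
  then have "c *\<^sub>R x - c *\<^sub>R closest_point T x \<in> orthogonal_comp T"
    using sub perp by (metis subspace_scale)
  then show "closest_point T (c *\<^sub>R x) = c *\<^sub>R closest_point T x"
    using sub T by (intro closest_point_subspace_eqI) (auto intro: subspace_scale)
qed

lemma inner_closest_point_subspace_commute: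
  fixes T :: "'a::euclidean_space set"
  assumes T: "subspace T"
  shows "closest_point T x \<bullet> y = x \<bullet> closest_point T y"
proof -
  have "(x - closest_point T x) \<bullet> closest_point T y = 0"
    "closest_point T x \<bullet> (y - closest_point T y) = 0"
    using closest_point_subspace[OF T, of x] closest_point_subspace[OF T, of y]
    by (auto simp: orthogonal_comp_def orthogonal_def inner_commute)
  then show ?thesis by (simp add: inner_diff_left inner_diff_right)
qed

context
  fixes T :: "(real^'n) set"
  assumes T: "subspace T"
begin

lemma proj_mat_apply: "proj_mat T *v x = closest_point T x"
  unfolding proj_mat_def using matrix_vector_mul(2)[OF linear_closest_point_subspace[OF T]]
  by metis

lemma proj_mat_in_subspace: "proj_mat T *v x \<in> T"
  by (simp add: proj_mat_apply closest_point_subspace(1)[OF T])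

lemma proj_mat_eq_0_iff: "proj_mat T *v x = 0 \<longleftrightarrow> x \<in> orthogonal_comp T"
  using closest_point_subspace(2)[OF T, of x]
    closest_point_subspace_eqI[OF T subspace_0[OF T], of x]
  by (auto simp: proj_mat_apply)

lemma proj_mat_idem: "proj_mat T ** proj_mat T = proj_mat T"
  by (simp add: matrix_eq proj_mat_apply closest_point_self closest_point_subspace(1)[OF T]
      flip: matrix_vector_mul_assoc)

lemma transpose_proj_mat: "transpose (proj_mat T) = proj_mat T"
  by (simp add: matrix_eq dot_lmul_matrix proj_mat_apply
      inner_closest_point_subspace_commute[OF T] flip: vector_eq_rdot)

end

section \<open>The Moore--Penrose pseudo-inverse\<close>

definition moore_penrose :: "real^'n^'m \<Rightarrow> real^'m^'n \<Rightarrow> bool" where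
  "moore_penrose A B \<longleftrightarrow> A ** B ** A = A \<and> B ** A ** B = B \<and>
     transpose (A ** B) = A ** B \<and> transpose (B ** A) = B ** A"

lemma moore_penrose_unique:
  assumes "moore_penrose A B" and "moore_penrose A C"
  shows "C = B"
proof -
  from assms have a1: "A ** B ** A = A" and a2: "B ** A ** B = B"
    and a3: "transpose (A ** B) = A ** B" and a4: "transpose (B ** A) = B ** A"
    and c1: "A ** C ** A = A" and c2: "C ** A ** C = C"
    and c3: "transpose (A ** C) = A ** C" and c4: "transpose (C ** A) = C ** A"
    by (auto simp: moore_penrose_def)
  have tA: "transpose A = transpose A ** transpose C ** transpose A"
    by (metis c1 matrix_transpose_mul matrix_mul_assoc)
  have tA': "transpose A = transpose A ** transpose B ** transpose A"
    by (metis a1 matrix_transpose_mul matrix_mul_assoc)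
  have "B = B ** transpose B ** transpose A"
    using a2 a3 by (metis matrix_transpose_mul matrix_mul_assoc)
  also have "\<dots> = B ** transpose B ** (transpose A ** transpose C ** transpose A)"
    using tA by simp
  also have "\<dots> = B ** transpose (A ** B) ** transpose (A ** C)"
    by (simp add: matrix_transpose_mul matrix_mul_assoc)
  also have "\<dots> = B ** A ** C"
    using a2 a3 c3 by (simp add: matrix_mul_assoc)
  finally have B: "B = B ** A ** C" .
  have "C = transpose A ** transpose C ** C"
    using c2 c4 by (metis matrix_transpose_mul)
  also have "\<dots> = (transpose A ** transpose B ** transpose A) ** transpose C ** C"
    using tA' by simp
  also have "\<dots> = transpose (B ** A) ** transpose (C ** A) ** C"
    by (simp add: matrix_transpose_mul matrix_mul_assoc)
  also have "\<dots> = B ** A ** (C ** A ** C)"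
    using a4 c4 by (simp add: matrix_mul_assoc)
  also have "\<dots> = B ** A ** C"
    using c2 by simp
  finally show "C = B" using B by simp
qed

text \<open>For \<open>Q\<close> the orthogonal projection onto the row space of \<open>A\<close>, the matrix
  \<open>K = A\<^sup>T A + (I - Q)\<close> is invertible and \<open>K\<^sup>-\<^sup>1 A\<^sup>T\<close> is the pseudo-inverse of \<open>A\<close>:
  \<open>K\<^sup>-\<^sup>1\<close> commutes with \<open>Q\<close> and inverts \<open>A\<^sup>T A\<close> on the range of \<open>Q\<close>.\<close>

definition regularized_gram :: "real^'n^'m \<Rightarrow> real^'n^'n \<Rightarrow> real^'n^'n" where
  "regularized_gram A Q = transpose A ** A + mat 1 - Q"

context
  fixes A :: "real^'n^'m" and Q :: "real^'n^'n"
  assumes QQ: "Q ** Q = Q" and Qt: "transpose Q = Q" and AQ: "A ** Q = A"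
begin

lemma regularized_gram_apply:
  "regularized_gram A Q *v x = (transpose A ** A) *v x + x - Q *v x"
  by (simp add: regularized_gram_def matrix_vector_mult_add_rdistrib
      matrix_vector_mult_diff_rdistrib del: transpose_matrix_vector)

lemma proj_mult_regularized_gram: "Q ** regularized_gram A Q = transpose A ** A"
proof -
  have "Q ** transpose A = transpose A"
    using AQ Qt by (metis matrix_transpose_mul)
  then have "Q *v ((transpose A ** A) *v x) = (transpose A ** A) *v x" for x
    by (simp add: matrix_vector_mul_assoc matrix_mul_assoc del: transpose_matrix_vector)
  then have "Q *v (regularized_gram A Q *v x) = (transpose A ** A) *v x" for x
    by (simp add: regularized_gram_apply matrix_vector_right_distrib
        matrix_vector_mult_diff_distrib matrix_vector_mul_assoc QQ del: transpose_matrix_vector)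
  then show ?thesis
    by (simp add: matrix_eq flip: matrix_vector_mul_assoc)
qed

lemma regularized_gram_mult_proj: "regularized_gram A Q ** Q = transpose A ** A"
proof -
  have "transpose A ** A ** Q = transpose A ** A"
    using AQ by (simp flip: matrix_mul_assoc)
  then have "regularized_gram A Q *v (Q *v x) = (transpose A ** A) *v x" for x
    unfolding regularized_gram_apply
    by (simp add: matrix_vector_mul_assoc QQ del: transpose_matrix_vector)
  then show ?thesis
    by (simp add: matrix_eq flip: matrix_vector_mul_assoc)
qed

lemma regularized_gram_left_invertible:
  assumes ker: "\<And>x. A *v x = 0 \<Longrightarrow> Q *v x = 0"
  obtains H where "H ** regularized_gram A Q = mat 1"
proof -
  have "x = 0" if Kx: "regularized_gram A Q *v x = 0" for x
  proof -
    have ATAx: "(transpose A ** A) *v x = 0"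
      using Kx by (metis proj_mult_regularized_gram matrix_vector_mul_assoc
          matrix_vector_mult_0_right)
    then have "(A *v x) \<bullet> (A *v x) = 0"
      by (metis dot_lmul_matrix inner_zero_left matrix_vector_mul_assoc transpose_matrix_vector)
    then have "Q *v x = 0"
      using ker by simp
    then show ?thesis
      using Kx ATAx by (simp add: regularized_gram_apply del: transpose_matrix_vector)
  qed
  then show ?thesis
    using that matrix_left_invertible_ker by blast
qed

lemma moore_penrose_regularized_gram:
  assumes HK: "H ** regularized_gram A Q = mat 1"
  shows "moore_penrose A (H ** transpose A)"
proof -
  let ?K = "regularized_gram A Q"
  have KH: "?K ** H = mat 1"
    using HK matrix_left_right_inverse by blast
  have "transpose ?K = transpose (transpose A ** A) + transpose (mat 1) - transpose Q"
    by (simp add: regularized_gram_def transpose_def vec_eq_iff)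
  then have "transpose ?K = ?K"
    by (simp add: regularized_gram_def matrix_transpose_mul Qt)
  then have "?K ** transpose H = mat 1"
    using HK by (metis matrix_transpose_mul transpose_mat)
  then have Ht: "transpose H = H"
    by (metis HK matrix_mul_assoc matrix_mul_lid matrix_mul_rid)
  have "H ** Q = H ** ((Q ** ?K) ** H)"
    using KH by (metis matrix_mul_assoc matrix_mul_rid)
  also have "\<dots> = (H ** ?K) ** (Q ** H)"
    using proj_mult_regularized_gram regularized_gram_mult_proj by (metis matrix_mul_assoc)
  finally have HQ: "H ** Q = Q ** H"
    using HK by simp
  have HATA: "H ** transpose A ** A = Q"
    using HK regularized_gram_mult_proj by (metis matrix_mul_assoc matrix_mul_lid)
  have QAt: "Q ** transpose A = transpose A"
    using AQ Qt by (metis matrix_transpose_mul)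
  show ?thesis
    unfolding moore_penrose_def
  proof (intro conjI)
    show "A ** (H ** transpose A) ** A = A"
      using HATA AQ by (metis matrix_mul_assoc)
    show "H ** transpose A ** A ** (H ** transpose A) = H ** transpose A"
      using HATA HQ QAt by (metis matrix_mul_assoc)
    show "transpose (A ** (H ** transpose A)) = A ** (H ** transpose A)"
      by (simp add: matrix_transpose_mul Ht matrix_mul_assoc)
    show "transpose (H ** transpose A ** A) = H ** transpose A ** A"
      by (simp add: HATA Qt)
  qed
qed

end

lemma moore_penrose_exists: "\<exists>B. moore_penrose (A :: real^'n^'m) B"
proof -
  define R where "R = range (\<lambda>y. transpose A *v y)"
  have R: "subspace R"
    unfolding R_def by (intro linear_subspace_image subspace_UNIV matrix_vector_mul_linear)
  define Q where "Q = proj_mat R"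
  have "A *v x = 0 \<longleftrightarrow> x \<in> orthogonal_comp R" for x
    using ker_orthogonal_comp_adjoint[OF matrix_vector_mul_linear[of A]]
    by (auto simp: R_def adjoint_matrix)
  then have ker: "A *v x = 0 \<longleftrightarrow> Q *v x = 0" for x
    by (simp add: Q_def proj_mat_eq_0_iff[OF R])
  have QQ: "Q ** Q = Q" and "transpose Q = Q"
    using proj_mat_idem[OF R] transpose_proj_mat[OF R] by (simp_all add: Q_def)
  have "A *v (x - Q *v x) = 0" for x
    unfolding ker by (simp add: matrix_vector_mult_diff_distrib matrix_vector_mul_assoc QQ)
  then have "A ** Q = A"
    by (simp add: matrix_eq matrix_vector_mult_diff_distrib flip: matrix_vector_mul_assoc)
  then show ?thesis
    using regularized_gram_left_invertible moore_penrose_regularized_gram QQ \<open>transpose Q = Q\<close> ker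
    by metis
qed

lemma moore_penrose_pinv: "moore_penrose A (pinv A)"
proof -
  have "pinv A = (THE B. moore_penrose A B)"
    by (simp add: pinv_def moore_penrose_def)
  then show ?thesis
    using theI'[of "moore_penrose A"] moore_penrose_exists moore_penrose_unique by metis
qed

lemma pinv_eqI: "moore_penrose A B \<Longrightarrow> pinv A = B"
  using moore_penrose_pinv moore_penrose_unique by blast

lemma moore_penrose_transpose:
  assumes "moore_penrose A B"
  shows "moore_penrose (transpose A) (transpose B)"
  using assms unfolding moore_penrose_def
  by (metis matrix_transpose_mul matrix_mul_assoc transpose_transpose)

lemma pinv_transpose: "pinv (transpose A) = transpose (pinv A)"
  by (intro pinv_eqI moore_penrose_transpose moore_penrose_pinv)

lemma the_least_norm_eqI:
  fixes p :: "'a::real_inner"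
  assumes "P p" and orth: "\<And>q. P q \<Longrightarrow> p \<bullet> (q - p) = 0"
  shows "(THE p. P p \<and> (\<forall>q. P q \<longrightarrow> norm p \<le> norm q)) = p"
proof -
  have pyth: "(norm q)\<^sup>2 = (norm p)\<^sup>2 + (norm (q - p))\<^sup>2" if "P q" for q
    using norm_add_Pythagorean[of p "q - p"] orth[OF that] by (simp add: orthogonal_def)
  show ?thesis
  proof (rule the_equality)
    show "P p \<and> (\<forall>q. P q \<longrightarrow> norm p \<le> norm q)"
    proof (intro conjI allI impI assms(1))
      fix q assume "P q"
      then have "(norm p)\<^sup>2 \<le> (norm q)\<^sup>2"
        using pyth by simp
      then show "norm p \<le> norm q"
        by (rule power2_le_imp_le) simp
    qed
  next
    fix p' assume p': "P p' \<and> (\<forall>q. P q \<longrightarrow> norm p' \<le> norm q)"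
    then have "(norm p')\<^sup>2 \<le> (norm p)\<^sup>2"
      using assms(1) by (simp add: power_mono)
    then show "p' = p"
      using pyth p' by simp
  qed
qed

lemma pinv_least_norm_solution:
  assumes "A *v x = b"
  shows "(THE p. A *v p = b \<and> (\<forall>q. A *v q = b \<longrightarrow> norm p \<le> norm q)) = pinv A *v b"
proof (rule the_least_norm_eqI)
  let ?B = "pinv A"
  from moore_penrose_pinv[of A] have ABA: "A ** ?B ** A = A" and BAB: "?B ** A ** ?B = ?B"
    and BAt: "transpose (?B ** A) = ?B ** A"
    by (auto simp: moore_penrose_def)
  show sol: "A *v (?B *v b) = b"
    using ABA assms by (metis matrix_vector_mul_assoc)
  fix q assume q: "A *v q = b"
  have "?B *v b = (?B ** A) *v (?B *v b)"
    using BAB by (metis matrix_vector_mul_assoc)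
  then have "(?B *v b) \<bullet> (q - ?B *v b) = ((?B ** A) *v (?B *v b)) \<bullet> (q - ?B *v b)"
    by simp
  also have "\<dots> = (?B *v b) \<bullet> ((?B ** A) *v (q - ?B *v b))"
    by (metis BAt dot_lmul_matrix transpose_matrix_vector)
  also have "\<dots> = 0"
    using q sol by (simp add: matrix_vector_mult_diff_distrib flip: matrix_vector_mul_assoc)
  finally show "(?B *v b) \<bullet> (q - ?B *v b) = 0" .
qed

lemma symmetric_idempotent_eqI:
  fixes P Q :: "real^'n^'n"
  assumes "P ** P = P" "transpose P = P" "Q ** Q = Q" "transpose Q = Q"
    and ker: "\<And>x. P *v x = 0 \<longleftrightarrow> Q *v x = 0"
  shows "P = Q"
proof -
  have absorb: "Y ** X = Y"
    if "X ** X = X" "\<And>x. X *v x = 0 \<longleftrightarrow> Y *v x = 0" for X Y :: "real^'n^'n"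
  proof -
    have "X *v (x - X *v x) = 0" for x
      using that(1) by (simp add: matrix_vector_mult_diff_distrib matrix_vector_mul_assoc)
    then have "Y *v (x - X *v x) = 0" for x
      using that(2) by blast
    then show ?thesis
      by (simp add: matrix_eq matrix_vector_mult_diff_distrib flip: matrix_vector_mul_assoc)
  qed
  have "P = P ** Q"
    using absorb[of Q P] assms by metis
  also have "\<dots> = transpose (Q ** P)"
    using assms by (simp add: matrix_transpose_mul)
  also have "\<dots> = Q"
    using absorb[of P Q] assms by metis
  finally show ?thesis .
qed

lemma pinv_mult_eq_proj:
  fixes A :: "real^'n^'m" and P :: "real^'n^'n"
  assumes "P ** P = P" "transpose P = P" and ker: "\<And>x. A *v x = 0 \<longleftrightarrow> P *v x = 0"
  shows "pinv A ** A = P"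
proof (rule symmetric_idempotent_eqI)
  from moore_penrose_pinv[of A] have ABA: "A ** pinv A ** A = A"
    and BAB: "pinv A ** A ** pinv A = pinv A" and BAt: "transpose (pinv A ** A) = pinv A ** A"
    by (auto simp: moore_penrose_def)
  show "transpose (pinv A ** A) = pinv A ** A"
    by (fact BAt)
  show "pinv A ** A ** (pinv A ** A) = pinv A ** A"
    using BAB by (simp add: matrix_mul_assoc)
  fix x
  have "pinv A ** A *v x = 0 \<longleftrightarrow> A *v x = 0"
    using ABA by (metis matrix_vector_mul_assoc matrix_vector_mult_0_right)
  then show "pinv A ** A *v x = 0 \<longleftrightarrow> P *v x = 0"
    using ker by simp
qed (use assms in auto)

lemma pinv_mult_proj_least_norm_solution:
  fixes Phi :: "real^'n^'p" and P :: "real^'n^'n"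
  assumes PP: "P ** P = P" and Pt: "transpose P = P"
    and inj: "\<And>x. Phi *v (P *v x) = 0 \<Longrightarrow> P *v x = 0"
  shows "(THE p. P *v (transpose Phi *v p) = P *v s \<and>
            (\<forall>q. P *v (transpose Phi *v q) = P *v s \<longrightarrow> norm p \<le> norm q))
         = transpose (pinv (Phi ** P)) *v (P *v s)"
proof -
  let ?M = "Phi ** P"
  have Mt: "transpose ?M *v q = P *v (transpose Phi *v q)" for q
    by (simp add: matrix_transpose_mul Pt matrix_vector_mul_assoc del: transpose_matrix_vector)
  have "?M *v x = 0 \<longleftrightarrow> P *v x = 0" for x
    using inj by (auto simp flip: matrix_vector_mul_assoc)
  then have "pinv ?M ** ?M = P"
    using pinv_mult_eq_proj PP Pt by blast
  then have "transpose ?M *v (transpose (pinv ?M) *v (P *v s)) = P *v s"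
    using PP Pt by (metis matrix_transpose_mul matrix_vector_mul_assoc)
  from pinv_least_norm_solution[OF this] show ?thesis
    by (simp add: Mt pinv_transpose del: transpose_matrix_vector)
qed

section \<open>Affine hulls\<close>

lemma lin_of_eq_translate:
  assumes a: "a \<in> affine hull E"
  shows "lin_of E = (\<lambda>x. x - a) ` (affine hull E)"
proof
  show "lin_of E \<subseteq> (\<lambda>x. x - a) ` (affine hull E)"
  proof
    fix v assume "v \<in> lin_of E"
    then obtain x y where v: "v = x - y" and xy: "x \<in> affine hull E" "y \<in> affine hull E"
      by (auto simp: lin_of_def)
    have "x + 1 *\<^sub>R (a - y) \<in> affine hull E"
      using mem_affine_3_minus[OF affine_affine_hull xy(1) a xy(2)] .
    moreover have "v = (x + 1 *\<^sub>R (a - y)) - a"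
      using v by simp
    ultimately show "v \<in> (\<lambda>x. x - a) ` (affine hull E)"
      by blast
  qed
qed (use a in \<open>auto simp: lin_of_def\<close>)

lemma subspace_lin_of: "a \<in> affine hull E \<Longrightarrow> subspace (lin_of E)"
  by (simp add: lin_of_eq_translate affine_diffs_subspace_subtract)

lemma mem_affine_hull_iff_proj_mat:
  assumes a: "a \<in> affine hull E"
  defines "P \<equiv> proj_mat (orthogonal_comp (lin_of E))"
  shows "x \<in> affine hull E \<longleftrightarrow> P *v x = P *v a"
proof -
  have L: "subspace (lin_of E)"
    using subspace_lin_of[OF a] .
  have "x \<in> affine hull E \<longleftrightarrow> x - a \<in> lin_of E"
    by (force simp: lin_of_eq_translate[OF a])
  also have "\<dots> \<longleftrightarrow> P *v (x - a) = 0"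
    by (simp add: P_def proj_mat_eq_0_iff subspace_orthogonal_comp orthogonal_comp_self[OF L])
  finally show ?thesis
    by (simp add: matrix_vector_mult_diff_distrib)
qed

lemma image_proj_mat_orthogonal_lin_of:
  assumes "a \<in> E"
  shows "(\<lambda>x. proj_mat (orthogonal_comp (lin_of E)) *v x) ` E =
    {proj_mat (orthogonal_comp (lin_of E)) *v a}"
  using assms mem_affine_hull_iff_proj_mat[OF hull_inc[OF assms]] by (auto intro: hull_inc)

theorem proposition1:
  fixes J :: "real^'n \<Rightarrow> real" and Phi :: "real^'n^'p" and x0 :: "real^'n"
  assumes "convex_on UNIV J"
    and "{x. Phi *v x = 0} \<inter> orthogonal_comp (lin_of (subdiff J x0)) = {0}"
  shows "eta_F J Phi x0 =
    (let T = orthogonal_comp (lin_of (subdiff J x0));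
         e = the_elem ((\<lambda>g. proj_mat T *v g) ` subdiff J x0)
     in transpose Phi *v (transpose (pinv (Phi ** proj_mat T)) *v e))"
proof -
  define S where "S = subdiff J x0"
  define P where "P = proj_mat (orthogonal_comp (lin_of S))"
  obtain s0 where s0: "s0 \<in> S"
    using convex_on_subgradient_exists[OF assms(1), of x0] by (auto simp: S_def subdiff_def)
  have T: "subspace (orthogonal_comp (lin_of S))"
    by (rule subspace_orthogonal_comp)
  have PP: "P ** P = P" and Pt: "transpose P = P"
    using proj_mat_idem[OF T] transpose_proj_mat[OF T] by (simp_all add: P_def)
  have inj: "P *v x = 0" if "Phi *v (P *v x) = 0" for x
    using that assms(2) proj_mat_in_subspace[OF T, of x] by (auto simp: P_def S_def)
  have "eta_F J Phi x0 = transpose Phi *v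
      (THE p. P *v (transpose Phi *v p) = P *v s0 \<and>
         (\<forall>q. P *v (transpose Phi *v q) = P *v s0 \<longrightarrow> norm p \<le> norm q))"
    unfolding eta_F_def S_def[symmetric] mem_affine_hull_iff_proj_mat[OF hull_inc[OF s0]] P_def ..
  also have "\<dots> = transpose Phi *v (transpose (pinv (Phi ** P)) *v (P *v s0))"
    by (simp only: pinv_mult_proj_least_norm_solution[OF PP Pt inj])
  finally show ?thesis
    using image_proj_mat_orthogonal_lin_of[OF s0] by (simp add: Let_def P_def flip: S_def)
qed

end
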